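(* Let $(\mathcal{B},\mathcal{B}',\langle\cdot,\cdot\rangle,k)$ be an RKBS with kernel on a set $X$ such that the set $\{k(x,\cdot):x\in X\}\subset\mathcal{B}'$ is linearly independent, and let $f:X\to X$. Then the Perron–Frobenius operator $K_f$ is densely defined with respect to $\langle\cdot,\cdot\rangle$, and $U_f=K_f'$, where $K_f'$ is the adjoint of $K_f$ with respect to $\langle\cdot,\cdot\rangle$.
   Context: An RKBS with kernel on $X$ is a quadruple $(\mathcal{B},\mathcal{B}',\langle\cdot,\cdot\rangle,k)$: $\mathcal{B},\mathcal{B}'$ are Banach spaces of functions on $X$ (pointwise operations), point evaluations on $\mathcal{B}$ are continuous, $\langle\cdot,\cdot\rangle:\mathcal{B}\times\mathcal{B}'\to\mathbb{C}$ is continuous bilinear, and $k:X\times X\to\mathbb{C}$ satisfies $k(x,\cdot)\in\mathcal{B}'$ and $g(x)=\langle g,k(x,\cdot)\rangle$ for all $x\in X$, $g\in\mathcal{B}$. The Koopman operator is $U_fg:=g\circ f$ on $D(U_f):=\{g\in\mathcal{B}: g\circ f\in\mathcal{B}\}$. The Perron–Frobenius operator $K_f:\mathrm{Span}\{k(x,\cdot):x\in X\}\to\mathrm{Span}\{k(x,\cdot):x\in X\}$ is the linear extension of $K_fk(x,\cdot):=k(f(x),\cdot)$. A subset $W\subset\mathcal{B}'$ is dense with respect to $\langle\cdot,\cdot\rangle$ if $g\in\mathcal{B}$ and $\langle g,w\rangle=0$ for all $w\in W$ imply $g=0$; an operator is densely defined w.r.t. $\langle\cdot,\cdot\rangle$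 if its domain is dense in this sense. For a densely defined $T:D(T)\subset\mathcal{B}'\to\mathcal{B}'$, its adjoint with respect to $\langle\cdot,\cdot\rangle$ is $T':D(T')\subset\mathcal{B}\to\mathcal{B}$ with $D(T')=\{g\in\mathcal{B}:\exists z\in\mathcal{B}\text{ with }\langle g,Th\rangle=\langle z,h\rangle\ \forall h\in D(T)\}$ and $T'g:=z$. Equality $U_f=K_f'$ includes equality of domains. *)

theory Defs
  imports "HOL-Analysis.Analysis"
begin

text \<open>Functions on X are modelled as elements of type 'x => complex (X = UNIV :: 'x set);
  a Banach space of functions on X is a set of such functions together with a norm on it.\<close>

definition banach_fun_space :: "('x \<Rightarrow> complex) set \<Rightarrow> (('x \<Rightarrow> complex) \<Rightarrow> real) \<Rightarrow> bool" where
  "banach_fun_space B nB \<longleftrightarrow>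
     (\<lambda>y. 0) \<in> B \<and>
     (\<forall>g\<in>B. \<forall>h\<in>B. (\<lambda>y. g y + h y) \<in> B) \<and>
     (\<forall>g\<in>B. \<forall>c::complex. (\<lambda>y. c * g y) \<in> B) \<and>
     (\<forall>g\<in>B. 0 \<le> nB g) \<and>
     (\<forall>g\<in>B. nB g = 0 \<longleftrightarrow> g = (\<lambda>y. 0)) \<and>
     (\<forall>g\<in>B. \<forall>c::complex. nB (\<lambda>y. c * g y) = cmod c * nB g) \<and>
     (\<forall>g\<in>B. \<forall>h\<in>B. nB (\<lambda>y. g y + h y) \<le> nB g + nB h) \<and>
     (\<forall>s::nat \<Rightarrow> 'x \<Rightarrow> complex. (\<forall>n. s n \<in> B) \<and>
          (\<forall>e>0. \<exists>N. \<forall>m\<ge>N. \<forall>n\<ge>N. nB (\<lambda>y. s m y - s n y) < e)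
        \<longrightarrow> (\<exists>g\<in>B. (\<lambda>n. nB (\<lambda>y. s n y - g y)) \<longlonglongrightarrow> 0))"

text \<open>RKBS with kernel: (B, B', pairing, k); nB, nB' are the norms of B, B'.
  k x is the function k(x, .).\<close>

definition rkbs ::
  "('x \<Rightarrow> complex) set \<Rightarrow> (('x \<Rightarrow> complex) \<Rightarrow> real) \<Rightarrow>
   ('x \<Rightarrow> complex) set \<Rightarrow> (('x \<Rightarrow> complex) \<Rightarrow> real) \<Rightarrow>
   (('x \<Rightarrow> complex) \<Rightarrow> ('x \<Rightarrow> complex) \<Rightarrow> complex) \<Rightarrow> ('x \<Rightarrow> 'x \<Rightarrow> complex) \<Rightarrow> bool" where
  "rkbs B nB B' nB' pair k \<longleftrightarrow>
     banach_fun_space B nB \<and> banach_fun_space B' nB' \<and>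
     (\<forall>x. \<exists>C. \<forall>g\<in>B. cmod (g x) \<le> C * nB g) \<and>
     (\<forall>g1\<in>B. \<forall>g2\<in>B. \<forall>h\<in>B'. pair (\<lambda>y. g1 y + g2 y) h = pair g1 h + pair g2 h) \<and>
     (\<forall>g\<in>B. \<forall>c. \<forall>h\<in>B'. pair (\<lambda>y. c * g y) h = c * pair g h) \<and>
     (\<forall>g\<in>B. \<forall>h1\<in>B'. \<forall>h2\<in>B'. pair g (\<lambda>y. h1 y + h2 y) = pair g h1 + pair g h2) \<and>
     (\<forall>g\<in>B. \<forall>c. \<forall>h\<in>B'. pair g (\<lambda>y. c * h y) = c * pair g h) \<and>
     (\<exists>C. \<forall>g\<in>B. \<forall>h\<in>B'. cmod (pair g h) \<le> C * nB g * nB' h) \<and>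
     (\<forall>x. k x \<in> B') \<and>
     (\<forall>x. \<forall>g\<in>B. g x = pair g (k x))"

definition kernel_lin_indep :: "('x \<Rightarrow> 'x \<Rightarrow> complex) \<Rightarrow> bool" where
  "kernel_lin_indep k \<longleftrightarrow>
     (\<forall>F c. finite F \<and> (\<lambda>y. \<Sum>x\<in>F. c x * k x y) = (\<lambda>y. 0) \<longrightarrow> (\<forall>x\<in>F. c x = (0::complex)))"

definition kernel_span :: "('x \<Rightarrow> 'x \<Rightarrow> complex) \<Rightarrow> ('x \<Rightarrow> complex) set" where
  "kernel_span k = {h. \<exists>F c. finite F \<and> h = (\<lambda>y. \<Sum>x\<in>F. c x * k x y)}"

text \<open>Perron-Frobenius operator: linear extension of k(x, .) |-> k(f x, .)
  (well defined when the family is linearly independent).\<close>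
definition perron_frobenius :: "('x \<Rightarrow> 'x \<Rightarrow> complex) \<Rightarrow> ('x \<Rightarrow> 'x) \<Rightarrow> ('x \<Rightarrow> complex) \<Rightarrow> ('x \<Rightarrow> complex)" where
  "perron_frobenius k f h = (SOME h'. \<exists>F c. finite F \<and> h = (\<lambda>y. \<Sum>x\<in>F. c x * k x y) \<and>
                                         h' = (\<lambda>y. \<Sum>x\<in>F. c x * k (f x) y))"

definition koopman_dom :: "('x \<Rightarrow> complex) set \<Rightarrow> ('x \<Rightarrow> 'x) \<Rightarrow> ('x \<Rightarrow> complex) set" where
  "koopman_dom B f = {g\<in>B. g \<circ> f \<in> B}"

definition koopman :: "('x \<Rightarrow> 'x) \<Rightarrow> ('x \<Rightarrow> complex) \<Rightarrow> ('x \<Rightarrow> complex)" where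
  "koopman f g = g \<circ> f"

definition dense_wrt :: "('x \<Rightarrow> complex) set \<Rightarrow> (('x \<Rightarrow> complex) \<Rightarrow> ('x \<Rightarrow> complex) \<Rightarrow> complex) \<Rightarrow> ('x \<Rightarrow> complex) set \<Rightarrow> bool" where
  "dense_wrt B pair W \<longleftrightarrow> (\<forall>g\<in>B. (\<forall>w\<in>W. pair g w = 0) \<longrightarrow> g = (\<lambda>y. 0))"

definition adj_dom :: "('x \<Rightarrow> complex) set \<Rightarrow> (('x \<Rightarrow> complex) \<Rightarrow> ('x \<Rightarrow> complex) \<Rightarrow> complex) \<Rightarrow>
    ('x \<Rightarrow> complex) set \<Rightarrow> (('x \<Rightarrow> complex) \<Rightarrow> ('x \<Rightarrow> complex)) \<Rightarrow> ('x \<Rightarrow> complex) set" where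
  "adj_dom B pair D T = {g\<in>B. \<exists>z\<in>B. \<forall>h\<in>D. pair g (T h) = pair z h}"

definition adj :: "('x \<Rightarrow> complex) set \<Rightarrow> (('x \<Rightarrow> complex) \<Rightarrow> ('x \<Rightarrow> complex) \<Rightarrow> complex) \<Rightarrow>
    ('x \<Rightarrow> complex) set \<Rightarrow> (('x \<Rightarrow> complex) \<Rightarrow> ('x \<Rightarrow> complex)) \<Rightarrow> ('x \<Rightarrow> complex) \<Rightarrow> ('x \<Rightarrow> complex)" where
  "adj B pair D T g = (THE z. z \<in> B \<and> (\<forall>h\<in>D. pair g (T h) = pair z h))"

end

theory Submission
  imports Defs
begin

text \<open>Pairing against \<open>k(x, \<cdot>)\<close> is point evaluation, so a \<open>g\<close> orthogonal to every
  \<open>k(x, \<cdot>)\<close> vanishes, and the relation \<open>\<langle>g, K\<^sub>f k(x, \<cdot>)\<rangle> = \<langle>z, k(x, \<cdot>)\<rangle>\<close> defining the adjoint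
  reads \<open>g (f x) = z x\<close>: it forces \<open>z = g \<circ> f\<close>, and conversely \<open>g \<circ> f \<in> \<B>\<close> satisfies it on
  all of the span by linearity. Linear independence of the \<open>k(x, \<cdot>)\<close> is what makes \<open>K\<^sub>f\<close>
  well defined on the span.\<close>

lemma banach_fun_space_zero: "banach_fun_space B n \<Longrightarrow> (\<lambda>y. 0) \<in> B"
  unfolding banach_fun_space_def by simp

lemma banach_fun_space_add:
  "banach_fun_space B n \<Longrightarrow> u \<in> B \<Longrightarrow> v \<in> B \<Longrightarrow> (\<lambda>y. u y + v y) \<in> B"
  unfolding banach_fun_space_def by simp

lemma banach_fun_space_scale:
  "banach_fun_space B n \<Longrightarrow> u \<in> B \<Longrightarrow> (\<lambda>y. a * u y) \<in> B"
  unfolding banach_fun_space_def by simp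

lemma rkbs_dual_space: "rkbs B nB B' nB' pair k \<Longrightarrow> banach_fun_space B' nB'"
  unfolding rkbs_def by simp

lemma rkbs_kernel_mem: "rkbs B nB B' nB' pair k \<Longrightarrow> k x \<in> B'"
  unfolding rkbs_def by simp

lemma rkbs_reproducing: "rkbs B nB B' nB' pair k \<Longrightarrow> g \<in> B \<Longrightarrow> pair g (k x) = g x"
  unfolding rkbs_def by simp

lemma rkbs_pair_add_right:
  "rkbs B nB B' nB' pair k \<Longrightarrow> g \<in> B \<Longrightarrow> u \<in> B' \<Longrightarrow> v \<in> B'
    \<Longrightarrow> pair g (\<lambda>y. u y + v y) = pair g u + pair g v"
  unfolding rkbs_def by simp

lemma rkbs_pair_scale_right:
  "rkbs B nB B' nB' pair k \<Longrightarrow> g \<in> B \<Longrightarrow> u \<in> B' \<Longrightarrow> pair g (\<lambda>y. a * u y) = a * pair g u"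
  unfolding rkbs_def by simp

lemma rkbs_pair_sum_right:
  assumes r: "rkbs B nB B' nB' pair k" and g: "g \<in> B" and "finite F"
    and "\<And>x. x \<in> F \<Longrightarrow> h x \<in> B'"
  shows "(\<lambda>y. \<Sum>x\<in>F. c x * h x y) \<in> B' \<and>
    pair g (\<lambda>y. \<Sum>x\<in>F. c x * h x y) = (\<Sum>x\<in>F. c x * pair g (h x))"
  using assms(3,4)
proof (induction F rule: finite_induct)
  case empty
  have zero: "(\<lambda>y. 0) \<in> B'"
    using banach_fun_space_zero[OF rkbs_dual_space[OF r]] .
  have "pair g (\<lambda>y. 0 * 0) = 0 * pair g (\<lambda>y. 0)"
    using rkbs_pair_scale_right[OF r g zero] .
  then show ?case using zero by simp
next
  case (insert a F)
  then have IH: "(\<lambda>y. \<Sum>x\<in>F. c x * h x y) \<in> B'"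
      "pair g (\<lambda>y. \<Sum>x\<in>F. c x * h x y) = (\<Sum>x\<in>F. c x * pair g (h x))"
    and ha: "h a \<in> B'"
    by auto
  have cha: "(\<lambda>y. c a * h a y) \<in> B'"
    using banach_fun_space_scale[OF rkbs_dual_space[OF r] ha] .
  show ?case
    using banach_fun_space_add[OF rkbs_dual_space[OF r] cha IH(1)]
      rkbs_pair_add_right[OF r g cha IH(1)] rkbs_pair_scale_right[OF r g ha] IH(2) insert(1,2)
    by simp
qed

lemma rkbs_pair_kernel_sum:
  assumes r: "rkbs B nB B' nB' pair k" and "g \<in> B" and "finite F"
  shows "pair g (\<lambda>y. \<Sum>x\<in>F. c x * k (\<phi> x) y) = (\<Sum>x\<in>F. c x * g (\<phi> x))"
  using rkbs_pair_sum_right[OF assms, of "\<lambda>x. k (\<phi> x)"] rkbs_kernel_mem[OF r]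
    rkbs_reproducing[OF r \<open>g \<in> B\<close>]
  by simp

lemma sum_diff_common_support:
  fixes c d :: "'a \<Rightarrow> 'b::comm_ring"
  assumes "finite F" and "finite G"
  shows "(\<Sum>x\<in>F \<union> G. ((if x \<in> F then c x else 0) - (if x \<in> G then d x else 0)) * w x)
       = (\<Sum>x\<in>F. c x * w x) - (\<Sum>x\<in>G. d x * w x)"
proof -
  have restrict: "(\<Sum>x\<in>F \<union> G. (if x \<in> A then a x else 0) * w x) = (\<Sum>x\<in>A. a x * w x)"
    if "A \<subseteq> F \<union> G" for A and a :: "'a \<Rightarrow> 'b"
    using sum.inter_restrict[of "F \<union> G" "\<lambda>x. a x * w x" A] assms that
    by (simp add: if_distrib[where f = "\<lambda>u. u * w _"] Int_absorb1 cong: if_cong)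
  show ?thesis
    by (simp add: left_diff_distrib sum_subtractf restrict)
qed

lemma kernel_lin_indep_sum_eq:
  assumes li: "kernel_lin_indep k" and F: "finite F" and G: "finite G"
    and eq: "(\<lambda>y. \<Sum>x\<in>F. c x * k x y) = (\<lambda>y. \<Sum>x\<in>G. d x * k x y)"
  shows "(\<Sum>x\<in>F. c x * v x) = (\<Sum>x\<in>G. d x * v x)"
proof -
  define e where "e x = (if x \<in> F then c x else 0) - (if x \<in> G then d x else 0)" for x
  have "(\<lambda>y. \<Sum>x\<in>F \<union> G. e x * k x y) = (\<lambda>y. 0)"
    using eq unfolding e_def sum_diff_common_support[OF F G] by (metis diff_self)
  then have "\<forall>x\<in>F \<union> G. e x = 0"
    using li F G unfolding kernel_lin_indep_def by blast
  then have "(\<Sum>x\<in>F \<union> G. e x * v x) = 0" by simp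
  then show ?thesis unfolding e_def sum_diff_common_support[OF F G] by simp
qed

lemma perron_frobenius_sum:
  assumes li: "kernel_lin_indep k" and F: "finite F"
  shows "perron_frobenius k f (\<lambda>y. \<Sum>x\<in>F. c x * k x y) = (\<lambda>y. \<Sum>x\<in>F. c x * k (f x) y)"
proof -
  let ?h = "\<lambda>y. \<Sum>x\<in>F. c x * k x y"
  have "\<exists>h' G d. finite G \<and> ?h = (\<lambda>y. \<Sum>x\<in>G. d x * k x y) \<and> h' = (\<lambda>y. \<Sum>x\<in>G. d x * k (f x) y)"
    by (intro exI conjI) (rule F, rule refl, rule refl)
  then have "\<exists>G d. finite G \<and> ?h = (\<lambda>y. \<Sum>x\<in>G. d x * k x y)
      \<and> perron_frobenius k f ?h = (\<lambda>y. \<Sum>x\<in>G. d x * k (f x) y)"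
    unfolding perron_frobenius_def by (rule someI_ex)
  then obtain G d where G: "finite G" and hG: "?h = (\<lambda>y. \<Sum>x\<in>G. d x * k x y)"
    and pf: "perron_frobenius k f ?h = (\<lambda>y. \<Sum>x\<in>G. d x * k (f x) y)"
    by blast
  show ?thesis
    unfolding pf using kernel_lin_indep_sum_eq[OF li F G hG] by metis
qed

lemma kernel_in_span: "k x \<in> kernel_span k"
  unfolding kernel_span_def by (rule CollectI, rule exI[of _ "{x}"], rule exI[of _ "\<lambda>_. 1"]) simp

lemma perron_frobenius_kernel:
  assumes "kernel_lin_indep k"
  shows "perron_frobenius k f (k x) = k (f x)"
  using perron_frobenius_sum[OF assms, of "{x}" f "\<lambda>_. 1"] by simp

lemma rkbs_kernel_span_dense:
  assumes "rkbs B nB B' nB' pair k"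
  shows "dense_wrt B pair (kernel_span k)"
  unfolding dense_wrt_def
proof (intro ballI impI ext)
  fix g x
  assume "g \<in> B" and "\<forall>w\<in>kernel_span k. pair g w = 0"
  then show "g x = 0"
    using rkbs_reproducing[OF assms \<open>g \<in> B\<close>, of x] kernel_in_span[of k x] by simp
qed

lemma rkbs_pair_perron_frobenius:
  assumes r: "rkbs B nB B' nB' pair k" and li: "kernel_lin_indep k"
    and g: "g \<in> B" and gf: "g \<circ> f \<in> B" and h: "h \<in> kernel_span k"
  shows "pair g (perron_frobenius k f h) = pair (g \<circ> f) h"
proof -
  obtain F c where F: "finite F" and h_eq: "h = (\<lambda>y. \<Sum>x\<in>F. c x * k x y)"
    using h unfolding kernel_span_def by blast
  have "pair g (perron_frobenius k f h) = (\<Sum>x\<in>F. c x * g (f x))"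
    unfolding h_eq perron_frobenius_sum[OF li F] using rkbs_pair_kernel_sum[OF r g F] .
  also have "\<dots> = pair (g \<circ> f) h"
    unfolding h_eq using rkbs_pair_kernel_sum[OF r gf F, of c "\<lambda>x. x"] by simp
  finally show ?thesis .
qed

lemma rkbs_perron_frobenius_adjoint_eq_comp:
  assumes r: "rkbs B nB B' nB' pair k" and li: "kernel_lin_indep k"
    and g: "g \<in> B" and z: "z \<in> B"
    and rel: "\<forall>h\<in>kernel_span k. pair g (perron_frobenius k f h) = pair z h"
  shows "z = g \<circ> f"
proof
  fix x
  have "pair g (perron_frobenius k f (k x)) = pair z (k x)"
    using rel kernel_in_span[of k x] by blast
  then show "z x = (g \<circ> f) x"
    by (simp add: perron_frobenius_kernel[OF li] rkbs_reproducing[OF r g] rkbs_reproducing[OF r z])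
qed

theorem lemma2:
  fixes B B' :: "('x \<Rightarrow> complex) set"
    and nB nB' :: "('x \<Rightarrow> complex) \<Rightarrow> real"
    and pair :: "('x \<Rightarrow> complex) \<Rightarrow> ('x \<Rightarrow> complex) \<Rightarrow> complex"
    and k :: "'x \<Rightarrow> 'x \<Rightarrow> complex"
    and f :: "'x \<Rightarrow> 'x"
  assumes "rkbs B nB B' nB' pair k"
    and "kernel_lin_indep k"
  shows "dense_wrt B pair (kernel_span k)
    \<and> adj_dom B pair (kernel_span k) (perron_frobenius k f) = koopman_dom B f
    \<and> (\<forall>g \<in> koopman_dom B f. adj B pair (kernel_span k) (perron_frobenius k f) g = koopman f g)"
proof (intro conjI ballI)
  note unique = rkbs_perron_frobenius_adjoint_eq_comp[OF assms]
    and relation = rkbs_pair_perron_frobenius[OF assms]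
  show "dense_wrt B pair (kernel_span k)"
    using rkbs_kernel_span_dense[OF assms(1)] .
  show "adj_dom B pair (kernel_span k) (perron_frobenius k f) = koopman_dom B f"
    unfolding adj_dom_def koopman_dom_def using unique relation by blast
  fix g assume "g \<in> koopman_dom B f"
  then have g: "g \<in> B" and gf: "g \<circ> f \<in> B" unfolding koopman_dom_def by auto
  show "adj B pair (kernel_span k) (perron_frobenius k f) g = koopman f g"
    unfolding adj_def koopman_def
    using gf relation[OF g gf] unique[OF g] by (intro the_equality) blast+
qed

end
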